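(* Let $((F,\boxplus,\boxdot),(F,\cdot))$ be a left near-vector space (the vector set and the scalar group having the same underlying set $F$) such that $F\boxdot 1=\{\alpha\boxdot1:\alpha\in F\}=F$. Then for every $\gamma\in F\setminus\{0\}$, $\gamma$ lies in the quasi-kernel, the operation $\boxplus_\gamma:=+_\gamma$ on $F$ is well-defined, $(F,\boxplus_\gamma,\cdot)$ is a left near-field, and $((F,\boxplus,\boxdot),(F,\cdot))$ is isomorphic as a near-vector space to the canonical near-vector space $((F,\boxplus_\gamma,\cdot),(F,\cdot))$.
   Context: A scalar group is a tuple $(F,\cdot,1,0,-1)$ where $(F,\cdot,1)$ is a monoid, $0\ne1$, $0\alpha=\alpha0=0$, $\{1,-1\}$ is exactly the solution set of $x^2=1$, and $(F\setminus\{0\},\cdot)$ is a group. A left near-field $(F,+,\cdot)$ is a set with a group operation $+$ (identity $0$), an associative multiplication such that $(F\setminus\{0\},\cdot)$ is a group and $0\cdot\alpha=0$, and the left distributive law $\gamma(\alpha+\beta)=\gamma\alpha+\gamma\beta$. A (left) near-vector space is a pair $((V,\boxplus,\boxdot),(F,\cdot))$ where $(F,\cdot)$ is a scalar group, $(V,\boxplus)$ an abelian group, and $\boxdot:F\times V\to V$ satisfies $1\boxdot v=v$, $\alpha\boxdot(\beta\boxdot v)=(\alpha\beta)\boxdot v$, $\alpha\boxdot(v\boxplus w)=\alpha\boxdot v\boxplus\alpha\boxdot w$, $(-1)\boxdot v=\boxminus v$, $0\boxdot v=0$, freeness ($\alpha\boxdot v=\beta\boxdot v$ implies $v=0$ or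 $\alpha=\beta$), and the quasi-kernel $Q(V)=\{v\in V:\forall\alpha,\beta\in F\ \exists\gamma\in F,\ \alpha\boxdot v\boxplus\beta\boxdot v=\gamma\boxdot v\}$ generates $(V,\boxplus)$. For $u\in Q(V)\setminus\{0\}$, $\alpha+_u\beta$ denotes the unique $\gamma\in F$ with $\alpha\boxdot u\boxplus\beta\boxdot u=\gamma\boxdot u$. An isomorphism $(\Psi,\varphi)$ from $((V_1,\boxplus_1,\boxdot_1),(F_1,\cdot_1))$ to $((V_2,\boxplus_2,\boxdot_2),(F_2,\cdot_2))$ consists of an additive bijection $\Psi:V_1\to V_2$ and a group isomorphism $\varphi:(F_1\setminus\{0\},\cdot_1)\to(F_2\setminus\{0\},\cdot_2)$ with $\Psi(\alpha\boxdot_1u)=\varphi(\alpha)\boxdot_2\Psi(u)$ for all $u\in V_1$, $\alpha\in F_1\setminus\{0\}$. The canonical near-vector space of a left near-field $(F,+,\cdot)$ is $((F,+,\cdot),(F,\cdot))$, the action being the multiplication. *)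

theory Defs
  imports "HOL-Algebra.Algebra"
begin

definition scalar_group :: "'a set \<Rightarrow> ('a \<Rightarrow> 'a \<Rightarrow> 'a) \<Rightarrow> 'a \<Rightarrow> 'a \<Rightarrow> 'a \<Rightarrow> bool" where
  "scalar_group F mul sone szero neg1 \<longleftrightarrow>
     monoid \<lparr>carrier = F, monoid.mult = mul, one = sone\<rparr> \<and>
     szero \<in> F \<and> neg1 \<in> F \<and> szero \<noteq> sone \<and>
     (\<forall>a\<in>F. mul szero a = szero \<and> mul a szero = szero) \<and>
     {x \<in> F. mul x x = sone} = {sone, neg1} \<and>
     group \<lparr>carrier = F - {szero}, monoid.mult = mul, one = sone\<rparr>"

definition vec_grp :: "'v set \<Rightarrow> ('v \<Rightarrow> 'v \<Rightarrow> 'v) \<Rightarrow> 'v \<Rightarrow> 'v monoid" where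
  "vec_grp V vadd vzero = \<lparr>carrier = V, monoid.mult = vadd, one = vzero\<rparr>"

definition quasi_kernel :: "'v set \<Rightarrow> ('v \<Rightarrow> 'v \<Rightarrow> 'v) \<Rightarrow> ('a \<Rightarrow> 'v \<Rightarrow> 'v) \<Rightarrow> 'a set \<Rightarrow> 'v set" where
  "quasi_kernel V vadd smul F =
     {v \<in> V. \<forall>\<alpha>\<in>F. \<forall>\<beta>\<in>F. \<exists>\<gamma>\<in>F. vadd (smul \<alpha> v) (smul \<beta> v) = smul \<gamma> v}"

definition near_vector_space ::
  "'v set \<Rightarrow> ('v \<Rightarrow> 'v \<Rightarrow> 'v) \<Rightarrow> 'v \<Rightarrow> ('a \<Rightarrow> 'v \<Rightarrow> 'v) \<Rightarrow>
   'a set \<Rightarrow> ('a \<Rightarrow> 'a \<Rightarrow> 'a) \<Rightarrow> 'a \<Rightarrow> 'a \<Rightarrow> 'a \<Rightarrow> bool" where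
  "near_vector_space V vadd vzero smul F mul sone szero neg1 \<longleftrightarrow>
     scalar_group F mul sone szero neg1 \<and>
     comm_group (vec_grp V vadd vzero) \<and>
     (\<forall>\<alpha>\<in>F. \<forall>v\<in>V. smul \<alpha> v \<in> V) \<and>
     (\<forall>v\<in>V. smul sone v = v) \<and>
     (\<forall>\<alpha>\<in>F. \<forall>\<beta>\<in>F. \<forall>v\<in>V. smul \<alpha> (smul \<beta> v) = smul (mul \<alpha> \<beta>) v) \<and>
     (\<forall>\<alpha>\<in>F. \<forall>v\<in>V. \<forall>w\<in>V. smul \<alpha> (vadd v w) = vadd (smul \<alpha> v) (smul \<alpha> w)) \<and>
     (\<forall>v\<in>V. smul neg1 v = inv\<^bsub>vec_grp V vadd vzero\<^esub> v) \<and>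
     (\<forall>v\<in>V. smul szero v = vzero) \<and>
     (\<forall>\<alpha>\<in>F. \<forall>\<beta>\<in>F. \<forall>v\<in>V. smul \<alpha> v = smul \<beta> v \<longrightarrow> v = vzero \<or> \<alpha> = \<beta>) \<and>
     generate (vec_grp V vadd vzero) (quasi_kernel V vadd smul F) = V"

definition qk_plus :: "('v \<Rightarrow> 'v \<Rightarrow> 'v) \<Rightarrow> ('a \<Rightarrow> 'v \<Rightarrow> 'v) \<Rightarrow> 'a set \<Rightarrow> 'v \<Rightarrow> 'a \<Rightarrow> 'a \<Rightarrow> 'a" where
  "qk_plus vadd smul F u \<alpha> \<beta> = (THE \<gamma>. \<gamma> \<in> F \<and> vadd (smul \<alpha> u) (smul \<beta> u) = smul \<gamma> u)"

definition left_near_field :: "'a set \<Rightarrow> ('a \<Rightarrow> 'a \<Rightarrow> 'a) \<Rightarrow> ('a \<Rightarrow> 'a \<Rightarrow> 'a) \<Rightarrow> 'a \<Rightarrow> bool" where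
  "left_near_field F pls mul szero \<longleftrightarrow>
     group \<lparr>carrier = F, monoid.mult = pls, one = szero\<rparr> \<and>
     (\<forall>a\<in>F. \<forall>b\<in>F. mul a b \<in> F) \<and>
     (\<forall>a\<in>F. \<forall>b\<in>F. \<forall>c\<in>F. mul (mul a b) c = mul a (mul b c)) \<and>
     (\<exists>e. group \<lparr>carrier = F - {szero}, monoid.mult = mul, one = e\<rparr>) \<and>
     (\<forall>a\<in>F. mul szero a = szero) \<and>
     (\<forall>a\<in>F. \<forall>b\<in>F. \<forall>c\<in>F. mul c (pls a b) = pls (mul c a) (mul c b))"

definition nvs_iso ::
  "('v \<Rightarrow> 'w) \<Rightarrow> ('a \<Rightarrow> 'b) \<Rightarrow>
   'v set \<Rightarrow> ('v \<Rightarrow> 'v \<Rightarrow> 'v) \<Rightarrow> ('a \<Rightarrow> 'v \<Rightarrow> 'v) \<Rightarrow> 'a set \<Rightarrow> ('a \<Rightarrow> 'a \<Rightarrow> 'a) \<Rightarrow> 'a \<Rightarrow>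
   'w set \<Rightarrow> ('w \<Rightarrow> 'w \<Rightarrow> 'w) \<Rightarrow> ('b \<Rightarrow> 'w \<Rightarrow> 'w) \<Rightarrow> 'b set \<Rightarrow> ('b \<Rightarrow> 'b \<Rightarrow> 'b) \<Rightarrow> 'b \<Rightarrow> bool" where
  "nvs_iso \<Psi> \<phi> V1 vadd1 smul1 F1 mul1 szero1 V2 vadd2 smul2 F2 mul2 szero2 \<longleftrightarrow>
     bij_betw \<Psi> V1 V2 \<and>
     (\<forall>u\<in>V1. \<forall>v\<in>V1. \<Psi> (vadd1 u v) = vadd2 (\<Psi> u) (\<Psi> v)) \<and>
     bij_betw \<phi> (F1 - {szero1}) (F2 - {szero2}) \<and>
     (\<forall>a\<in>F1 - {szero1}. \<forall>b\<in>F1 - {szero1}. \<phi> (mul1 a b) = mul2 (\<phi> a) (\<phi> b)) \<and>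
     (\<forall>u\<in>V1. \<forall>\<alpha>\<in>F1 - {szero1}. \<Psi> (smul1 \<alpha> u) = smul2 (\<phi> \<alpha>) (\<Psi> u))"

definition nvs_isomorphic ::
  "'v set \<Rightarrow> ('v \<Rightarrow> 'v \<Rightarrow> 'v) \<Rightarrow> ('a \<Rightarrow> 'v \<Rightarrow> 'v) \<Rightarrow> 'a set \<Rightarrow> ('a \<Rightarrow> 'a \<Rightarrow> 'a) \<Rightarrow> 'a \<Rightarrow>
   'w set \<Rightarrow> ('w \<Rightarrow> 'w \<Rightarrow> 'w) \<Rightarrow> ('b \<Rightarrow> 'w \<Rightarrow> 'w) \<Rightarrow> 'b set \<Rightarrow> ('b \<Rightarrow> 'b \<Rightarrow> 'b) \<Rightarrow> 'b \<Rightarrow> bool" where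
  "nvs_isomorphic V1 vadd1 smul1 F1 mul1 szero1 V2 vadd2 smul2 F2 mul2 szero2 \<longleftrightarrow>
     (\<exists>\<Psi> \<phi>. nvs_iso \<Psi> \<phi> V1 vadd1 smul1 F1 mul1 szero1 V2 vadd2 smul2 F2 mul2 szero2)"

end

theory Submission
  imports Defs
begin

text \<open>
  Since \<open>F \<boxdot> 1 = F\<close> and nonzero scalars are invertible, every nonzero vector \<open>\<gamma>\<close> is cyclic,
  so by freeness the orbit map \<open>\<alpha> \<mapsto> \<alpha> \<boxdot> \<gamma>\<close> is a bijection from the scalars onto the vectors.
  The operation \<open>+\<^sub>\<gamma>\<close> is the vector addition pulled back along this bijection; hence the inverse
  bijection, the coordinate map with respect to \<open>\<gamma>\<close>, transports the near-vector space structure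
  onto the canonical one of \<open>(F, +\<^sub>\<gamma>, \<cdot>)\<close>, with the identity on scalars. The near-field axioms
  of \<open>(F, +\<^sub>\<gamma>, \<cdot>)\<close> are among the axioms of that canonical near-vector space.
\<close>

lemma left_near_field_if_canonical_near_vector_space:
  assumes "near_vector_space F pls szero mul F mul sone szero neg1"
  shows "left_near_field F pls mul szero"
proof -
  have sg: "scalar_group F mul sone szero neg1"
    and cg: "comm_group (vec_grp F pls szero)"
    and distrib: "\<forall>c\<in>F. \<forall>a\<in>F. \<forall>b\<in>F. mul c (pls a b) = pls (mul c a) (mul c b)"
    using assms unfolding near_vector_space_def by blast+
  have "monoid \<lparr>carrier = F, monoid.mult = mul, one = sone\<rparr>"
    and "group \<lparr>carrier = F - {szero}, monoid.mult = mul, one = sone\<rparr>"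
    and "\<forall>a\<in>F. mul szero a = szero"
    using sg unfolding scalar_group_def by blast+
  moreover have "group \<lparr>carrier = F, monoid.mult = pls, one = szero\<rparr>"
    using cg unfolding comm_group_def vec_grp_def by blast
  ultimately show ?thesis
    unfolding left_near_field_def using distrib by (auto dest: monoid.m_closed monoid.m_assoc)
qed

locale nvs =
  fixes V :: "'v set" and vadd :: "'v \<Rightarrow> 'v \<Rightarrow> 'v" and vzero :: 'v
    and smul :: "'a \<Rightarrow> 'v \<Rightarrow> 'v"
    and F :: "'a set" and mul :: "'a \<Rightarrow> 'a \<Rightarrow> 'a" and sone szero neg1 :: 'a
  assumes near_vector_space: "near_vector_space V vadd vzero smul F mul sone szero neg1"
begin

abbreviation Vgrp :: "'v monoid" where "Vgrp \<equiv> vec_grp V vadd vzero"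

lemma scalar_group: "scalar_group F mul sone szero neg1"
  and comm_group_Vgrp: "comm_group Vgrp"
  and smul_closed: "\<alpha> \<in> F \<Longrightarrow> v \<in> V \<Longrightarrow> smul \<alpha> v \<in> V"
  and smul_sone: "v \<in> V \<Longrightarrow> smul sone v = v"
  and smul_smul: "\<alpha> \<in> F \<Longrightarrow> \<beta> \<in> F \<Longrightarrow> v \<in> V \<Longrightarrow> smul \<alpha> (smul \<beta> v) = smul (mul \<alpha> \<beta>) v"
  and smul_vadd: "\<alpha> \<in> F \<Longrightarrow> v \<in> V \<Longrightarrow> w \<in> V \<Longrightarrow> smul \<alpha> (vadd v w) = vadd (smul \<alpha> v) (smul \<alpha> w)"
  and smul_neg1: "v \<in> V \<Longrightarrow> smul neg1 v = inv\<^bsub>Vgrp\<^esub> v"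
  and smul_szero: "v \<in> V \<Longrightarrow> smul szero v = vzero"
  and smul_free: "\<alpha> \<in> F \<Longrightarrow> \<beta> \<in> F \<Longrightarrow> v \<in> V \<Longrightarrow> smul \<alpha> v = smul \<beta> v \<Longrightarrow> v = vzero \<or> \<alpha> = \<beta>"
  and generate_quasi_kernel: "generate Vgrp (quasi_kernel V vadd smul F) = V"
  using near_vector_space unfolding near_vector_space_def by blast+

lemma szero_in: "szero \<in> F"
  and sone_in: "sone \<in> F"
  and neg1_in: "neg1 \<in> F"
  and mul_closed: "a \<in> F \<Longrightarrow> b \<in> F \<Longrightarrow> mul a b \<in> F"
  and mul_assoc: "a \<in> F \<Longrightarrow> b \<in> F \<Longrightarrow> c \<in> F \<Longrightarrow> mul (mul a b) c = mul a (mul b c)"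
  using scalar_group monoid.m_closed monoid.m_assoc monoid.one_closed
  unfolding scalar_group_def by fastforce+

lemma mul_left_inverse: "a \<in> F \<Longrightarrow> a \<noteq> szero \<Longrightarrow> \<exists>a'\<in>F. mul a' a = sone"
  using scalar_group group.l_inv_ex[of "\<lparr>carrier = F - {szero}, monoid.mult = mul, one = sone\<rparr>" a]
  unfolding scalar_group_def by auto

lemma vadd_closed: "v \<in> V \<Longrightarrow> w \<in> V \<Longrightarrow> vadd v w \<in> V"
  using comm_group_Vgrp monoid.m_closed unfolding comm_group_def group_def vec_grp_def by fastforce

lemma quasi_kernel_sum_unique:
  assumes u: "u \<in> quasi_kernel V vadd smul F" "u \<noteq> vzero" and "\<alpha> \<in> F" "\<beta> \<in> F"
  shows "\<exists>!\<gamma>. \<gamma> \<in> F \<and> vadd (smul \<alpha> u) (smul \<beta> u) = smul \<gamma> u"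
proof (rule ex_ex1I)
  show "\<exists>\<gamma>. \<gamma> \<in> F \<and> vadd (smul \<alpha> u) (smul \<beta> u) = smul \<gamma> u"
    using assms unfolding quasi_kernel_def by blast
  show "\<gamma> = \<gamma>'" if "\<gamma> \<in> F \<and> vadd (smul \<alpha> u) (smul \<beta> u) = smul \<gamma> u"
    and "\<gamma>' \<in> F \<and> vadd (smul \<alpha> u) (smul \<beta> u) = smul \<gamma>' u" for \<gamma> \<gamma>'
    using that u smul_free unfolding quasi_kernel_def by auto
qed

definition cyclic_vector :: "'v \<Rightarrow> bool" where
  "cyclic_vector u \<longleftrightarrow> u \<in> V \<and> (\<lambda>\<alpha>. smul \<alpha> u) ` F = V"

lemma cyclic_vector_in_quasi_kernel:
  assumes "cyclic_vector u" shows "u \<in> quasi_kernel V vadd smul F"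
proof -
  have "vadd (smul \<alpha> u) (smul \<beta> u) \<in> (\<lambda>\<gamma>. smul \<gamma> u) ` F" if "\<alpha> \<in> F" "\<beta> \<in> F" for \<alpha> \<beta>
    using assms that smul_closed vadd_closed unfolding cyclic_vector_def by simp
  then show ?thesis
    using assms unfolding cyclic_vector_def quasi_kernel_def by auto
qed

lemma cyclic_vector_if_nonzero:
  assumes u: "cyclic_vector u" and \<gamma>: "\<gamma> \<in> V" "\<gamma> \<noteq> vzero"
  shows "cyclic_vector \<gamma>"
proof -
  have u_in: "u \<in> V" and orbit_u: "(\<lambda>\<alpha>. smul \<alpha> u) ` F = V"
    using u unfolding cyclic_vector_def by auto
  obtain x where x: "x \<in> F" "\<gamma> = smul x u"
    using orbit_u \<gamma> by blast
  then have "x \<noteq> szero"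
    using u_in \<gamma> smul_szero by blast
  then obtain x' where x': "x' \<in> F" "mul x' x = sone"
    using mul_left_inverse x by blast
  have "smul (mul c x') \<gamma> = smul c u" if "c \<in> F" for c
  proof -
    have "smul (mul c x') \<gamma> = smul (mul c (mul x' x)) u"
      using that x x' u_in by (simp add: smul_smul mul_closed mul_assoc)
    also have "\<dots> = smul c (smul (mul x' x) u)"
      using that x x' u_in by (intro smul_smul[symmetric] mul_closed)
    finally show ?thesis
      using x' u_in by (simp add: smul_sone)
  qed
  then have "smul c u \<in> (\<lambda>\<alpha>. smul \<alpha> \<gamma>) ` F" if "c \<in> F" for c
    using that x'(1) mul_closed by (metis image_eqI)
  then have "V \<subseteq> (\<lambda>\<alpha>. smul \<alpha> \<gamma>) ` F"
    using orbit_u by auto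
  then show ?thesis
    using \<gamma> smul_closed unfolding cyclic_vector_def by blast
qed

lemma near_vector_space_transfer:
  assumes bij: "bij_betw \<Psi> V W"
    and add: "\<And>u v. u \<in> V \<Longrightarrow> v \<in> V \<Longrightarrow> \<Psi> (vadd u v) = wadd (\<Psi> u) (\<Psi> v)"
    and zero: "\<Psi> vzero = wzero"
    and act: "\<And>\<alpha> u. \<alpha> \<in> F \<Longrightarrow> u \<in> V \<Longrightarrow> \<Psi> (smul \<alpha> u) = wsmul \<alpha> (\<Psi> u)"
  shows "near_vector_space W wadd wzero wsmul F mul sone szero neg1"
proof -
  let ?Wgrp = "vec_grp W wadd wzero"
  have iso: "\<Psi> \<in> iso Vgrp ?Wgrp"
    using bij add unfolding iso_def hom_def vec_grp_def bij_betw_def by auto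
  have cg: "comm_group ?Wgrp"
    using comm_group.iso_imp_img_comm_group[OF comm_group_Vgrp iso] zero by (simp add: vec_grp_def)
  interpret hom: group_hom Vgrp ?Wgrp \<Psi>
    using comm_group_Vgrp cg iso unfolding group_hom_def group_hom_axioms_def comm_group_def iso_def
    by blast
  have W: "W = \<Psi> ` V" and inj: "inj_on \<Psi> V"
    using bij unfolding bij_betw_def by auto
  have "wadd (wsmul \<alpha> (\<Psi> u)) (wsmul \<beta> (\<Psi> u)) = wsmul \<gamma> (\<Psi> u) \<longleftrightarrow>
        vadd (smul \<alpha> u) (smul \<beta> u) = smul \<gamma> u" if "\<alpha> \<in> F" "\<beta> \<in> F" "\<gamma> \<in> F" "u \<in> V" for \<alpha> \<beta> \<gamma> u
    using that by (simp add: act[symmetric] add[symmetric] smul_closed vadd_closed inj_on_eq_iff[OF inj])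
  then have Q: "quasi_kernel W wadd wsmul F = \<Psi> ` quasi_kernel V vadd smul F"
    unfolding quasi_kernel_def W by auto
  have "quasi_kernel V vadd smul F \<subseteq> carrier Vgrp"
    by (auto simp: quasi_kernel_def vec_grp_def)
  then have "generate ?Wgrp (quasi_kernel W wadd wsmul F) = \<Psi> ` generate Vgrp (quasi_kernel V vadd smul F)"
    unfolding Q by (rule hom.generate_img)
  then have "generate ?Wgrp (quasi_kernel W wadd wsmul F) = W"
    using generate_quasi_kernel W by simp
  moreover have "smul \<alpha> v = smul \<beta> v \<longrightarrow> \<Psi> v = wzero \<or> \<alpha> = \<beta>"
    if "\<alpha> \<in> F" "\<beta> \<in> F" "v \<in> V" for \<alpha> \<beta> v
    using that smul_free zero by blast
  moreover have "wsmul neg1 (\<Psi> u) = inv\<^bsub>?Wgrp\<^esub> (\<Psi> u)" if "u \<in> V" for u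
    using that neg1_in act[symmetric] smul_neg1 hom.hom_inv[of u] by (simp add: vec_grp_def)
  ultimately show ?thesis
    unfolding near_vector_space_def
    using scalar_group cg
    by (simp add: W act[symmetric] smul_closed smul_sone smul_smul smul_vadd add[symmetric] vadd_closed
        smul_szero zero inj_on_eq_iff[OF inj] sone_in szero_in mul_closed)
qed

end

locale cyclic_nvs = nvs V vadd vzero smul F mul sone szero neg1
  for V :: "'v set" and vadd vzero and smul :: "'a \<Rightarrow> 'v \<Rightarrow> 'v" and F mul sone szero neg1 +
  fixes g :: 'v
  assumes cyclic: "cyclic_vector g" and nonzero: "g \<noteq> vzero"
begin

lemma bij_betw_orbit: "bij_betw (\<lambda>\<alpha>. smul \<alpha> g) F V"
  using cyclic nonzero smul_free unfolding cyclic_vector_def bij_betw_def inj_on_def by blast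

definition coord :: "'v \<Rightarrow> 'a" where
  "coord = the_inv_into F (\<lambda>\<alpha>. smul \<alpha> g)"

lemma bij_betw_coord: "bij_betw coord V F"
  unfolding coord_def by (rule bij_betw_the_inv_into[OF bij_betw_orbit])

lemma smul_coord: "w \<in> V \<Longrightarrow> smul (coord w) g = w"
  unfolding coord_def by (rule f_the_inv_into_f_bij_betw[OF bij_betw_orbit])

lemma coord_orbit: "\<alpha> \<in> F \<Longrightarrow> coord (smul \<alpha> g) = \<alpha>"
  using bij_betw_orbit the_inv_into_f_f[where f = "\<lambda>\<alpha>. smul \<alpha> g"]
  unfolding coord_def bij_betw_def by simp

lemma qk_plus_eq_coord: "qk_plus vadd smul F g \<alpha> \<beta> = coord (vadd (smul \<alpha> g) (smul \<beta> g))"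
  unfolding qk_plus_def coord_def the_inv_into_def
  by (simp add: eq_commute[of "vadd (smul \<alpha> g) (smul \<beta> g)"])

lemma coord_vadd: "u \<in> V \<Longrightarrow> v \<in> V \<Longrightarrow> coord (vadd u v) = qk_plus vadd smul F g (coord u) (coord v)"
  by (simp add: qk_plus_eq_coord smul_coord)

lemma coord_vzero: "coord vzero = szero"
  using coord_orbit[OF szero_in] cyclic smul_szero unfolding cyclic_vector_def by simp

lemma coord_smul:
  assumes "\<alpha> \<in> F" "u \<in> V" shows "coord (smul \<alpha> u) = mul \<alpha> (coord u)"
proof -
  have "coord u \<in> F"
    using bij_betw_coord assms(2) by (rule bij_betw_apply)
  moreover have "g \<in> V"
    using cyclic unfolding cyclic_vector_def by blast
  ultimately have "smul \<alpha> u = smul (mul \<alpha> (coord u)) g"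
    using assms smul_smul[of \<alpha> "coord u" g] by (simp add: smul_coord)
  with \<open>coord u \<in> F\<close> assms(1) show ?thesis
    by (simp add: coord_orbit mul_closed)
qed

lemma canonical_near_vector_space:
  "near_vector_space F (qk_plus vadd smul F g) szero mul F mul sone szero neg1"
  by (rule near_vector_space_transfer[OF bij_betw_coord coord_vadd coord_vzero coord_smul])

lemma isomorphic_canonical:
  "nvs_isomorphic V vadd smul F mul szero F (qk_plus vadd smul F g) mul F mul szero"
  unfolding nvs_isomorphic_def nvs_iso_def
  using bij_betw_coord coord_vadd coord_smul by (intro exI[of _ coord] exI[of _ id]) auto

end

theorem mainTheorem8:
  fixes F :: "'a set" and mul vadd smul :: "'a \<Rightarrow> 'a \<Rightarrow> 'a"
    and sone szero neg1 vzero :: 'a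
  assumes nvs: "near_vector_space F vadd vzero smul F mul sone szero neg1"
    and span: "{smul \<alpha> sone | \<alpha>. \<alpha> \<in> F} = F"
  shows "\<forall>\<gamma>\<in>F - {vzero}.
           \<gamma> \<in> quasi_kernel F vadd smul F \<and>
           (\<forall>\<alpha>\<in>F. \<forall>\<beta>\<in>F. \<exists>!\<delta>. \<delta> \<in> F \<and> vadd (smul \<alpha> \<gamma>) (smul \<beta> \<gamma>) = smul \<delta> \<gamma>) \<and>
           left_near_field F (qk_plus vadd smul F \<gamma>) mul szero \<and>
           near_vector_space F (qk_plus vadd smul F \<gamma>) szero mul F mul sone szero neg1 \<and>
           nvs_isomorphic F vadd smul F mul szero
                          F (qk_plus vadd smul F \<gamma>) mul F mul szero"
    (is "\<forall>\<gamma>\<in>_. ?claim \<gamma>")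
proof
  fix \<gamma> assume \<gamma>: "\<gamma> \<in> F - {vzero}"
  interpret nvs F vadd vzero smul F mul sone szero neg1
    by (rule nvs.intro[OF nvs])
  have "cyclic_vector sone"
    using span sone_in unfolding cyclic_vector_def by (simp add: Setcompr_eq_image)
  then have cyclic: "cyclic_vector \<gamma>"
    using \<gamma> cyclic_vector_if_nonzero by blast
  interpret cyclic_nvs F vadd vzero smul F mul sone szero neg1 \<gamma>
    using cyclic \<gamma> by unfold_locales auto
  have "\<gamma> \<in> quasi_kernel F vadd smul F"
    by (rule cyclic_vector_in_quasi_kernel[OF cyclic])
  with \<gamma> show "?claim \<gamma>"
    by (intro conjI ballI quasi_kernel_sum_unique canonical_near_vector_space isomorphic_canonical
        left_near_field_if_canonical_near_vector_space[OF canonical_near_vector_space]) auto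
qed

end
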